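(* Let $\Gamma$ be a finite simple graph and $\alpha\in[0,1/3)$. If $\mathcal C_1$ and $\mathcal C_2$ are two distinct $\alpha$-quasi-equivalence classes of $\Gamma$, then $\mathcal C_1\cap\mathcal C_2=\emptyset$.
   Context: For a vertex $v$ of a simple graph $\Gamma$, $\mathcal N_\Gamma(v)$ is the set of vertices adjacent to $v$; $A\Delta B=(A\cup B)\setminus(A\cap B)$. For $\alpha\in[0,1/3)$, a set $\mathcal C$ of vertices of $\Gamma$ is an $\alpha$-quasi-equivalence class of $\Gamma$ if (1) $|(\mathcal N_\Gamma(v)\cup\{v\})\Delta\mathcal C|\le\alpha|\mathcal C|$ for every $v\in\mathcal C$, and (2) $|\mathcal N_\Gamma(v)\cap\mathcal C|<(1-3\alpha)|\mathcal C|$ for every vertex $v\notin\mathcal C$. *)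

theory Defs
  imports Complex_Main
begin

definition simple_graph :: "'a set \<Rightarrow> ('a \<Rightarrow> 'a \<Rightarrow> bool) \<Rightarrow> bool" where
  "simple_graph V E \<longleftrightarrow> finite V \<and> (\<forall>u v. E u v \<longrightarrow> u \<in> V \<and> v \<in> V)
     \<and> (\<forall>u v. E u v \<longrightarrow> E v u) \<and> (\<forall>v. \<not> E v v)"

definition nbhd :: "'a set \<Rightarrow> ('a \<Rightarrow> 'a \<Rightarrow> bool) \<Rightarrow> 'a \<Rightarrow> 'a set" where
  "nbhd V E v = {u \<in> V. E v u}"

definition symdiff :: "'a set \<Rightarrow> 'a set \<Rightarrow> 'a set" where
  "symdiff A B = (A \<union> B) - (A \<inter> B)"

definition quasi_equiv_class :: "'a set \<Rightarrow> ('a \<Rightarrow> 'a \<Rightarrow> bool) \<Rightarrow> real \<Rightarrow> 'a set \<Rightarrow> bool" where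
  "quasi_equiv_class V E \<alpha> C \<longleftrightarrow> C \<subseteq> V
     \<and> (\<forall>v\<in>C. real (card (symdiff (nbhd V E v \<union> {v}) C)) \<le> \<alpha> * real (card C))
     \<and> (\<forall>v\<in>V - C. real (card (nbhd V E v \<inter> C)) < (1 - 3 * \<alpha>) * real (card C))"

end

theory Submission
  imports Defs
begin

text \<open>Suppose two distinct classes \<open>A\<close>, \<open>B\<close> with \<open>|B| \<le> |A|\<close> share a vertex \<open>v\<close>.
  Both are close to the closed neighbourhood of \<open>v\<close>, so \<open>|A - B| \<le> \<alpha>(|A| + |B|)\<close>.
  A vertex \<open>w \<in> B - A\<close> would have a closed neighbourhood close to \<open>B\<close>, hence
  close to \<open>A\<close>, and so it would see at least \<open>(1 - 3\<alpha>)|A|\<close> vertices of \<open>A\<close>,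
  contradicting condition (2) for \<open>A\<close>; thus \<open>B \<subset> A\<close>. Then \<open>|A| \<le> 2|B|\<close>, and the
  same argument with the roles exchanged, applied to a vertex of \<open>A - B\<close>, gives
  the contradiction \<open>3\<alpha>|B| < \<alpha>|A| \<le> 2\<alpha>|B|\<close>.\<close>

definition closed_nbhd :: "'a set \<Rightarrow> ('a \<Rightarrow> 'a \<Rightarrow> bool) \<Rightarrow> 'a \<Rightarrow> 'a set" where
  "closed_nbhd V E v = nbhd V E v \<union> {v}"

lemma card_Diff_le_card_Diff_add:
  assumes "finite A" "finite B"
  shows "card (A - C) \<le> card (A - B) + card (B - C)"
proof -
  have "card (A - C) \<le> card ((A - B) \<union> (B - C))"
    by (rule card_mono) (use assms in auto)
  also have "\<dots> \<le> card (A - B) + card (B - C)"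
    by (rule card_Un_le)
  finally show ?thesis .
qed

lemma card_Diff_le_card_symdiff:
  assumes "finite A" "finite B"
  shows "card (A - B) \<le> card (symdiff A B)" "card (B - A) \<le> card (symdiff A B)"
  using assms by (auto intro!: card_mono simp: symdiff_def)

lemma finite_closed_nbhd: "simple_graph V E \<Longrightarrow> finite (closed_nbhd V E v)"
  by (simp add: closed_nbhd_def nbhd_def simple_graph_def)

lemma quasi_equiv_class_finite:
  "simple_graph V E \<Longrightarrow> quasi_equiv_class V E \<alpha> C \<Longrightarrow> finite C"
  by (meson finite_subset quasi_equiv_class_def simple_graph_def)

lemma quasi_equiv_class_closed_nbhd:
  assumes G: "simple_graph V E" and C: "quasi_equiv_class V E \<alpha> C" and "v \<in> C"
  shows "real (card (C - closed_nbhd V E v)) \<le> \<alpha> * real (card C)"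
    and "real (card (closed_nbhd V E v - C)) \<le> \<alpha> * real (card C)"
proof -
  have "real (card (symdiff (closed_nbhd V E v) C)) \<le> \<alpha> * real (card C)"
    using C \<open>v \<in> C\<close> by (simp add: quasi_equiv_class_def closed_nbhd_def)
  with card_Diff_le_card_symdiff[OF finite_closed_nbhd[OF G, of v] quasi_equiv_class_finite[OF G C]]
  show "real (card (C - closed_nbhd V E v)) \<le> \<alpha> * real (card C)"
    and "real (card (closed_nbhd V E v - C)) \<le> \<alpha> * real (card C)"
    by linarith+
qed

lemma quasi_equiv_class_card_Diff_shared:
  assumes G: "simple_graph V E"
    and A: "quasi_equiv_class V E \<alpha> A" and B: "quasi_equiv_class V E \<alpha> B"
    and "v \<in> A" "v \<in> B"
  shows "real (card (A - B)) \<le> \<alpha> * real (card A) + \<alpha> * real (card B)"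
proof -
  have "card (A - B) \<le> card (A - closed_nbhd V E v) + card (closed_nbhd V E v - B)"
    by (rule card_Diff_le_card_Diff_add[OF quasi_equiv_class_finite[OF G A] finite_closed_nbhd[OF G]])
  with quasi_equiv_class_closed_nbhd(1)[OF G A \<open>v \<in> A\<close>]
    quasi_equiv_class_closed_nbhd(2)[OF G B \<open>v \<in> B\<close>]
  show ?thesis by linarith
qed

lemma quasi_equiv_class_card_Diff_outside:
  assumes G: "simple_graph V E"
    and A: "quasi_equiv_class V E \<alpha> A" and B: "quasi_equiv_class V E \<alpha> B"
    and "w \<in> B" "w \<notin> A"
  shows "3 * \<alpha> * real (card A) < real (card (A - B)) + \<alpha> * real (card B)"
proof -
  let ?N = "closed_nbhd V E w"
  have fin_A: "finite A" by (rule quasi_equiv_class_finite[OF G A])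
  have "w \<in> V - A"
    using B \<open>w \<in> B\<close> \<open>w \<notin> A\<close> by (auto simp: quasi_equiv_class_def)
  then have few_neighbours_in_A: "real (card (nbhd V E w \<inter> A)) < (1 - 3 * \<alpha>) * real (card A)"
    using A by (simp add: quasi_equiv_class_def)
  have "nbhd V E w \<inter> A = A - (A - ?N)"
    using \<open>w \<notin> A\<close> by (auto simp: closed_nbhd_def)
  then have "card (nbhd V E w \<inter> A) = card A - card (A - ?N)"
    by (simp add: card_Diff_subset fin_A)
  moreover have "card (A - ?N) \<le> card A"
    by (rule card_mono) (auto simp: fin_A)
  ultimately have "3 * \<alpha> * real (card A) < real (card (A - ?N))"
    using few_neighbours_in_A by (simp add: algebra_simps)
  also have "real (card (A - ?N)) \<le> real (card (A - B)) + real (card (B - ?N))"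
    using card_Diff_le_card_Diff_add[OF fin_A quasi_equiv_class_finite[OF G B], of ?N]
    by (metis of_nat_add of_nat_le_iff)
  also have "real (card (B - ?N)) \<le> \<alpha> * real (card B)"
    by (rule quasi_equiv_class_closed_nbhd(1)[OF G B \<open>w \<in> B\<close>])
  finally show ?thesis by simp
qed

lemma quasi_equiv_class_subset_of_card_le:
  assumes G: "simple_graph V E" and "0 \<le> \<alpha>"
    and A: "quasi_equiv_class V E \<alpha> A" and B: "quasi_equiv_class V E \<alpha> B"
    and "v \<in> A" "v \<in> B" and "card B \<le> card A"
  shows "B \<subseteq> A"
proof
  fix w assume "w \<in> B"
  show "w \<in> A"
  proof (rule ccontr)
    assume "w \<notin> A"
    have "\<alpha> * real (card B) \<le> \<alpha> * real (card A)"
      using \<open>card B \<le> card A\<close> \<open>0 \<le> \<alpha>\<close> by (simp add: mult_left_mono)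
    then show False
      using quasi_equiv_class_card_Diff_outside[OF G A B \<open>w \<in> B\<close> \<open>w \<notin> A\<close>]
        quasi_equiv_class_card_Diff_shared[OF G A B \<open>v \<in> A\<close> \<open>v \<in> B\<close>]
      by linarith
  qed
qed

lemma quasi_equiv_class_card_le_twice_subset:
  assumes G: "simple_graph V E" and "\<alpha> < 1/3"
    and A: "quasi_equiv_class V E \<alpha> A" and B: "quasi_equiv_class V E \<alpha> B"
    and "v \<in> B" and "B \<subseteq> A"
  shows "real (card A) \<le> 2 * real (card B)"
proof -
  have "card A = card B + card (A - B)"
    using \<open>B \<subseteq> A\<close> quasi_equiv_class_finite[OF G A]
    by (metis card_Diff_subset card_mono finite_subset le_add_diff_inverse)
  moreover have "real (card (A - B)) \<le> \<alpha> * real (card A) + \<alpha> * real (card B)"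
    using quasi_equiv_class_card_Diff_shared[OF G A B] \<open>v \<in> B\<close> \<open>B \<subseteq> A\<close> by blast
  ultimately have "(1 - \<alpha>) * real (card A) \<le> (1 + \<alpha>) * real (card B)"
    by (simp add: algebra_simps)
  also have "\<dots> \<le> 2 * (1 - \<alpha>) * real (card B)"
    using \<open>\<alpha> < 1/3\<close> by (intro mult_right_mono) auto
  finally have "(1 - \<alpha>) * real (card A) \<le> (1 - \<alpha>) * (2 * real (card B))"
    by (simp add: algebra_simps)
  then show ?thesis
    using \<open>\<alpha> < 1/3\<close> by simp
qed

lemma quasi_equiv_class_eq_of_shared_vertex:
  assumes G: "simple_graph V E" and "0 \<le> \<alpha>" "\<alpha> < 1/3"
    and A: "quasi_equiv_class V E \<alpha> A" and B: "quasi_equiv_class V E \<alpha> B"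
    and "v \<in> A" "v \<in> B" and "card B \<le> card A"
  shows "A = B"
proof (rule ccontr)
  assume "A \<noteq> B"
  have "B \<subseteq> A"
    by (rule quasi_equiv_class_subset_of_card_le) fact+
  then obtain w where "w \<in> A" "w \<notin> B"
    using \<open>A \<noteq> B\<close> by blast
  have "card (B - A) = 0"
    using \<open>B \<subseteq> A\<close> by (metis Diff_eq_empty_iff card.empty)
  then have "3 * \<alpha> * real (card B) < \<alpha> * real (card A)"
    using quasi_equiv_class_card_Diff_outside[OF G B A \<open>w \<in> A\<close> \<open>w \<notin> B\<close>] by simp
  also have "\<dots> \<le> \<alpha> * (2 * real (card B))"
    using quasi_equiv_class_card_le_twice_subset[OF G \<open>\<alpha> < 1/3\<close> A B \<open>v \<in> B\<close> \<open>B \<subseteq> A\<close>] \<open>0 \<le> \<alpha>\<close>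
    by (rule mult_left_mono)
  finally show False
    using \<open>0 \<le> \<alpha>\<close> by (simp add: algebra_simps mult_less_0_iff)
qed

theorem proposition5p1:
  fixes V :: "'a set" and E :: "'a \<Rightarrow> 'a \<Rightarrow> bool" and \<alpha> :: real
    and C1 C2 :: "'a set"
  assumes "simple_graph V E"
    and "0 \<le> \<alpha>" and "\<alpha> < 1/3"
    and "quasi_equiv_class V E \<alpha> C1"
    and "quasi_equiv_class V E \<alpha> C2"
    and "C1 \<noteq> C2"
  shows "C1 \<inter> C2 = {}"
proof (rule ccontr)
  assume "C1 \<inter> C2 \<noteq> {}"
  then obtain v where "v \<in> C1" "v \<in> C2"
    by blast
  have "C1 = C2"
  proof (cases "card C2 \<le> card C1")
    case True
    then show ?thesis
      by (rule quasi_equiv_class_eq_of_shared_vertex[OF assms(1-5) \<open>v \<in> C1\<close> \<open>v \<in> C2\<close>])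
  next
    case False
    then show ?thesis
      using quasi_equiv_class_eq_of_shared_vertex[OF assms(1-3,5,4) \<open>v \<in> C2\<close> \<open>v \<in> C1\<close>] by simp
  qed
  with \<open>C1 \<noteq> C2\<close> show False ..
qed

end
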